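(* Assume the CFL condition $0\le \lambda \sup_{w\ge 1} W'(w)\le 1$, let $(y_{0,i})_{i\in\mathbb Z}$ be a bounded sequence with $y_{0,i}\ge1$, let $(w^n_i)$ be the solution of the scheme, and set $(\Delta\widehat w)^n=\sup_i|w^n_{i+1}-w^n_i|$ and $t^n=n\Delta t$. Then there is a constant $C$ independent of $n$, $\Delta z$, $\Delta t$ and $\alpha$ (e.g. $C=2\|W'\|_\infty\Phi(0)$) such that for all $n\ge0$ $$(\Delta\widehat w)^n\le (\Delta\widehat w)^0\exp\Bigl(\frac{C}{\alpha}t^n\Bigr),\qquad \sup_i|w^{n+1}_i-w^n_i|\le \lambda\,\|W'\|_\infty\,(\Delta\widehat w)^0\exp\Bigl(\frac{C}{\alpha}t^n\Bigr),$$ where $\|W'\|_\infty=\sup_{w\ge1}|W'(w)|$.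
   Context: Kernel: $\Phi:[0,\infty)\to[0,\infty)$ is non-increasing with $\int_0^\infty\Phi(z)\,dz=1$ and $\int_0^\infty z\Phi(z)\,dz<\infty$; for $\alpha>0$, $\Phi_\alpha(z)=\alpha^{-1}\Phi(z/\alpha)$. Flux: $V\in C^1([0,\infty))$ is non-increasing and $W:[1,\infty)\to\mathbb R$, $W(w)=V(1/w)$. Discretization: $\Delta z>0$, $\Delta t>0$, $\lambda=\Delta t/\Delta z$, $z_j=(j-\tfrac12)\Delta z$ for $j\in\tfrac12\mathbb Z$, and for integers $j\ge i$, $\Phi_{ij\alpha}=\int_{z_{j-1/2}}^{z_{j+1/2}}\Phi_\alpha(\zeta-z_{i-1/2})\,d\zeta$. The scheme: $w^0_i=\sum_{j\ge i}\Phi_{ij\alpha}y_{0,j}$ and $w^{n+1}_i=w^n_i+\lambda(\overline W^{\,n}_{i+1/2}-\overline W^{\,n}_{i-1/2})$ for $n\ge0$, where $\overline W^{\,n}_{i-1/2}=\sum_{j\ge i}\Phi_{ij\alpha}W(w^n_j)$. *)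

theory Defs
  imports "HOL-Analysis.Analysis"
begin

definition Phi_a :: "(real \<Rightarrow> real) \<Rightarrow> real \<Rightarrow> real \<Rightarrow> real" where
  "Phi_a Phi \<alpha> z = Phi (z / \<alpha>) / \<alpha>"

text \<open>Phi_{ij alpha} = integral over [z_{j-1/2}, z_{j+1/2}] of Phi_alpha(zeta - z_{i-1/2}),
  with z_k = (k - 1/2) dz, so z_{j-1/2} = (j-1) dz and z_{j+1/2} = j dz.\<close>
definition Phi_ij :: "(real \<Rightarrow> real) \<Rightarrow> real \<Rightarrow> real \<Rightarrow> int \<Rightarrow> int \<Rightarrow> real" where
  "Phi_ij Phi \<alpha> dz i j =
     integral {real_of_int (j - 1) * dz .. real_of_int j * dz}
       (\<lambda>\<zeta>. Phi_a Phi \<alpha> (\<zeta> - real_of_int (i - 1) * dz))"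

definition kconv :: "(real \<Rightarrow> real) \<Rightarrow> real \<Rightarrow> real \<Rightarrow> int \<Rightarrow> (int \<Rightarrow> real) \<Rightarrow> real" where
  "kconv Phi \<alpha> dz i f = (\<Sum>k. Phi_ij Phi \<alpha> dz i (i + int k) * f (i + int k))"

definition Wf :: "(real \<Rightarrow> real) \<Rightarrow> real \<Rightarrow> real" where
  "Wf V w = V (1 / w)"

primrec scheme :: "(real \<Rightarrow> real) \<Rightarrow> (real \<Rightarrow> real) \<Rightarrow> real \<Rightarrow> real \<Rightarrow> real
    \<Rightarrow> (int \<Rightarrow> real) \<Rightarrow> nat \<Rightarrow> int \<Rightarrow> real" where
  "scheme Phi V \<alpha> dz dt y0 0 = (\<lambda>i. kconv Phi \<alpha> dz i y0)"
| "scheme Phi V \<alpha> dz dt y0 (Suc n) =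
     (\<lambda>i. scheme Phi V \<alpha> dz dt y0 n i
        + (dt / dz) * (kconv Phi \<alpha> dz (i + 1) (\<lambda>j. Wf V (scheme Phi V \<alpha> dz dt y0 n j))
                       - kconv Phi \<alpha> dz i (\<lambda>j. Wf V (scheme Phi V \<alpha> dz dt y0 n j))))"

definition Dw :: "(nat \<Rightarrow> int \<Rightarrow> real) \<Rightarrow> nat \<Rightarrow> real" where
  "Dw w n = Sup (range (\<lambda>i. \<bar>w n (i + 1) - w n i\<bar>))"

end

(* The weights \<gamma>\<^sub>k = \<integral> \<Phi> over [k h, (k + 1) h], h = \<Delta>z / \<alpha>, of the scheme are nonnegative,
   nonincreasing (because \<Phi> is) and sum to 1.  Summation by parts writes the flux difference of
   one update as -\<gamma>\<^sub>0 times the local flux jump plus a combination of further flux jumps whose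
   coefficients \<gamma>\<^sub>k - \<gamma>\<^sub>k\<^sub>+\<^sub>1 are nonnegative with total mass at most \<gamma>\<^sub>0.  The flux W is
   nondecreasing and Lipschitz with constant L = sup W', so under the CFL condition the local term
   is a convex damping.  This gives the maximum principle 1 \<le> w \<le> sup y\<^sub>0 and shows that
   sup\<^sub>i |w\<^sub>i\<^sub>+\<^sub>1 - w\<^sub>i| grows at most by the factor 1 + \<lambda> L \<gamma>\<^sub>0 per time step; finally
   \<gamma>\<^sub>0 \<le> \<Phi>(0) \<Delta>z / \<alpha> bounds this factor by exp (L \<Phi>(0) \<Delta>t / \<alpha>). *)

theory Submission
  imports Defs
begin

section \<open>Summation by parts against nonincreasing weights\<close>

lemma sum_weighted_increments_by_parts:
  fixes g e :: "nat \<Rightarrow> 'a::comm_ring"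
  shows "(\<Sum>k<n. g k * (e (Suc k) - e k))
           = g n * e n - g 0 * e 0 + (\<Sum>k<n. (g k - g (Suc k)) * e (Suc k))"
  by (induction n) (simp_all add: algebra_simps)

lemma sums_weighted_increments_le:
  fixes g e :: "nat \<Rightarrow> real"
  assumes g_nonneg: "\<And>k. 0 \<le> g k" and g_antimono: "\<And>k. g (Suc k) \<le> g k"
    and e_nonpos: "\<And>k. e k \<le> 0"
    and T: "(\<lambda>k. g k * (e (Suc k) - e k)) sums T"
  shows "T \<le> - (g 0 * e 0)"
proof -
  have "(\<Sum>k<n. g k * (e (Suc k) - e k)) \<le> - (g 0 * e 0)" for n
  proof -
    have "g n * e n \<le> 0"
      using g_nonneg e_nonpos by (simp add: mult_nonneg_nonpos)
    moreover have "(\<Sum>k<n. (g k - g (Suc k)) * e (Suc k)) \<le> 0"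
      using g_antimono e_nonpos by (intro sum_nonpos) (simp add: mult_nonneg_nonpos)
    ultimately show ?thesis
      unfolding sum_weighted_increments_by_parts by linarith
  qed
  with T show ?thesis
    unfolding sums_def by (intro LIMSEQ_le_const2) auto
qed

lemma sums_weighted_increments_abs_le:
  fixes g e :: "nat \<Rightarrow> real"
  assumes g_nonneg: "\<And>k. 0 \<le> g k" and g_antimono: "\<And>k. g (Suc k) \<le> g k"
    and e_bounded: "\<And>k. \<bar>e k\<bar> \<le> B"
    and T: "(\<lambda>k. g k * (e (Suc k) - e k)) sums T"
  shows "\<bar>T + g 0 * e 0\<bar> \<le> g 0 * B"
proof -
  have "\<bar>(\<Sum>k<n. g k * (e (Suc k) - e k)) + g 0 * e 0\<bar> \<le> g 0 * B" for n
  proof -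
    have "\<bar>g n * e n\<bar> \<le> g n * B"
      using g_nonneg e_bounded by (simp add: abs_mult mult_left_mono)
    moreover have "\<bar>\<Sum>k<n. (g k - g (Suc k)) * e (Suc k)\<bar> \<le> (\<Sum>k<n. (g k - g (Suc k)) * B)"
      using g_antimono e_bounded
      by (intro order_trans[OF sum_abs sum_mono]) (simp add: abs_mult mult_left_mono)
    moreover have "(\<Sum>k<n. (g k - g (Suc k)) * B) = (g 0 - g n) * B"
      by (simp add: sum_distrib_right[symmetric] sum_lessThan_telescope')
    ultimately show ?thesis
      unfolding sum_weighted_increments_by_parts by (simp add: algebra_simps)
  qed
  moreover have "(\<lambda>n. \<bar>(\<Sum>k<n. g k * (e (Suc k) - e k)) + g 0 * e 0\<bar>) \<longlonglongrightarrow> \<bar>T + g 0 * e 0\<bar>"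
    using T unfolding sums_def by (intro tendsto_intros)
  ultimately show ?thesis
    by (intro LIMSEQ_le_const2) auto
qed

lemma sums_weighted_abs_le:
  fixes g e :: "nat \<Rightarrow> real"
  assumes g_nonneg: "\<And>k. 0 \<le> g k" and g_summable: "summable g" and g_suminf: "suminf g \<le> 1"
    and e_bounded: "\<And>k. \<bar>e k\<bar> \<le> B"
    and T: "(\<lambda>k. g k * e k) sums T"
  shows "\<bar>T\<bar> \<le> B"
proof -
  have "0 \<le> B" using e_bounded[of 0] by linarith
  have dominated: "\<bar>g k * e k\<bar> \<le> g k * B" for k
    using g_nonneg e_bounded by (simp add: abs_mult mult_left_mono)
  have "summable (\<lambda>k. \<bar>g k * e k\<bar>)"
    using dominated by (intro summable_comparison_test'[OF summable_mult2[OF g_summable]]) auto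
  then have "\<bar>T\<bar> \<le> (\<Sum>k. \<bar>g k * e k\<bar>)"
    using summable_rabs sums_unique[OF T] by metis
  also have "\<dots> \<le> (\<Sum>k. g k * B)"
    using dominated \<open>summable (\<lambda>k. \<bar>g k * e k\<bar>)\<close> summable_mult2[OF g_summable]
    by (intro suminf_le) auto
  also have "\<dots> = suminf g * B"
    using g_summable by (rule suminf_mult2[symmetric])
  also have "\<dots> \<le> B"
    using mult_right_mono[OF g_suminf \<open>0 \<le> B\<close>] by simp
  finally show ?thesis .
qed

section \<open>An abstract monotone upwind scheme\<close>

definition forward_conv :: "(nat \<Rightarrow> real) \<Rightarrow> (int \<Rightarrow> real) \<Rightarrow> int \<Rightarrow> real" where
  "forward_conv g f i = (\<Sum>k. g k * f (i + int k))"

definition scheme_step :: "(nat \<Rightarrow> real) \<Rightarrow> (real \<Rightarrow> real) \<Rightarrow> real \<Rightarrow> (int \<Rightarrow> real) \<Rightarrow> int \<Rightarrow> real" where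
  "scheme_step g F lam w i =
     w i + lam * (forward_conv g (\<lambda>j. F (w j)) (i + 1) - forward_conv g (\<lambda>j. F (w j)) i)"

definition max_jump :: "(int \<Rightarrow> real) \<Rightarrow> real" where
  "max_jump w = Sup (range (\<lambda>i. \<bar>w (i + 1) - w i\<bar>))"

lemma forward_conv_sums:
  assumes g_nonneg: "\<And>k. 0 \<le> g k" and g_summable: "summable g"
    and f_bounded: "\<And>j. \<bar>f j\<bar> \<le> B"
  shows "(\<lambda>k. g k * f (i + int k)) sums forward_conv g f i"
proof -
  have "summable (\<lambda>k. g k * f (i + int k))"
    using g_nonneg f_bounded
    by (intro summable_comparison_test'[OF summable_mult2[OF g_summable, of B]])
      (simp add: abs_mult mult_left_mono)
  then show ?thesis
    unfolding forward_conv_def by (rule summable_sums)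
qed

lemma forward_conv_bounds:
  assumes g_nonneg: "\<And>k. 0 \<le> g k" and g_sums: "g sums 1"
    and f_lower: "\<And>j. lo \<le> f j" and f_upper: "\<And>j. f j \<le> hi"
  shows "lo \<le> forward_conv g f i \<and> forward_conv g f i \<le> hi"
proof -
  have "\<bar>f j\<bar> \<le> \<bar>lo\<bar> + \<bar>hi\<bar>" for j
    using f_lower[of j] f_upper[of j] by linarith
  then have S: "(\<lambda>k. g k * f (i + int k)) sums forward_conv g f i"
    by (rule forward_conv_sums[OF g_nonneg sums_summable[OF g_sums]])
  have lo_sums: "(\<lambda>k. g k * lo) sums lo" and hi_sums: "(\<lambda>k. g k * hi) sums hi"
    using sums_mult2[OF g_sums] by simp_all
  have "g k * lo \<le> g k * f (i + int k)" "g k * f (i + int k) \<le> g k * hi" for k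
    using g_nonneg f_lower f_upper by (simp_all add: mult_left_mono)
  with sums_le[OF _ lo_sums S] sums_le[OF _ S hi_sums] show ?thesis
    by blast
qed

lemma abs_diff_le_max_jump:
  assumes "\<And>j. lo \<le> w j" and "\<And>j. w j \<le> hi"
  shows "\<bar>w (i + 1) - w i\<bar> \<le> max_jump w"
proof -
  have "\<bar>w (j + 1) - w j\<bar> \<le> hi - lo" for j
    using assms[of j] assms[of "j + 1"] by (simp add: abs_le_iff)
  then have "bdd_above (range (\<lambda>i. \<bar>w (i + 1) - w i\<bar>))"
    by (intro bdd_aboveI2)
  then show ?thesis
    unfolding max_jump_def by (rule cSup_upper[OF rangeI])
qed

locale monotone_scheme =
  fixes g :: "nat \<Rightarrow> real" and F :: "real \<Rightarrow> real" and lo L lam :: real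
  assumes weight_nonneg: "\<And>k. 0 \<le> g k"
    and weight_antimono: "\<And>k. g (Suc k) \<le> g k"
    and weight_summable: "summable g"
    and weight_suminf_le: "suminf g \<le> 1"
    and flux_mono: "mono_on {lo..} F"
    and flux_lipschitz: "L-lipschitz_on {lo..} F"
    and lam_nonneg: "0 \<le> lam"
    and cfl: "lam * L * g 0 \<le> 1"
begin


lemma flux_increment:
  assumes "lo \<le> a" "lo \<le> b"
  shows "\<exists>c. 0 \<le> c \<and> c \<le> L \<and> F b - F a = c * (b - a)"
proof (cases "a = b")
  case True
  then show ?thesis
    using lipschitz_on_nonneg[OF flux_lipschitz] by (intro exI[of _ 0]) simp
next
  case False
  define c where "c = (F b - F a) / (b - a)"
  have "0 \<le> (F b - F a) * (b - a)"
    using assms mono_onD[OF flux_mono, of a b] mono_onD[OF flux_mono, of b a]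
    by (cases "a \<le> b") (auto simp: mult_le_0_iff zero_le_mult_iff)
  then have "0 \<le> c"
    unfolding c_def by (simp add: zero_le_divide_iff zero_le_mult_iff)
  moreover have eq: "F b - F a = c * (b - a)"
    using False unfolding c_def by simp
  moreover have "c * \<bar>b - a\<bar> \<le> L * \<bar>b - a\<bar>"
    using lipschitz_onD[OF flux_lipschitz, of b a] assms \<open>0 \<le> c\<close>
    by (simp add: dist_real_def eq abs_mult)
  then have "c \<le> L"
    using False by simp
  ultimately show ?thesis by blast
qed

lemma cfl_factor:
  assumes "0 \<le> c" "c \<le> L"
  shows "0 \<le> lam * g 0 * c" "lam * g 0 * c \<le> 1"
proof -
  show "0 \<le> lam * g 0 * c"
    using assms lam_nonneg weight_nonneg[of 0] by simp
  have "lam * g 0 * c \<le> lam * g 0 * L"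
    using assms lam_nonneg weight_nonneg[of 0] by (intro mult_left_mono) auto
  then show "lam * g 0 * c \<le> 1"
    using cfl by (simp add: mult_ac)
qed

context
  fixes w :: "int \<Rightarrow> real" and hi :: real
  assumes w_lower: "\<And>j. lo \<le> w j" and w_upper: "\<And>j. w j \<le> hi"
begin

lemma flux_increments_sums:
  "(\<lambda>k. g k * (F (w (i + int (Suc k))) - F (w (i + int k))))
     sums (forward_conv g (\<lambda>j. F (w j)) (i + 1) - forward_conv g (\<lambda>j. F (w j)) i)"
proof -
  have "\<bar>F (w j)\<bar> \<le> \<bar>F lo\<bar> + \<bar>F hi\<bar>" for j
    using mono_onD[OF flux_mono, of lo "w j"] mono_onD[OF flux_mono, of "w j" hi]
      w_lower[of j] w_upper[of j] by auto
  then have "(\<lambda>k. g k * F (w (i' + int k))) sums forward_conv g (\<lambda>j. F (w j)) i'" for i'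
    by (rule forward_conv_sums[OF weight_nonneg weight_summable])
  from sums_diff[OF this[of "i + 1"] this[of i]] show ?thesis
    by (simp add: right_diff_distrib add_ac)
qed

lemma scheme_step_le: "scheme_step g F lam w i \<le> hi"
proof -
  define T where "T = forward_conv g (\<lambda>j. F (w j)) (i + 1) - forward_conv g (\<lambda>j. F (w j)) i"
  obtain c where c: "0 \<le> c" "c \<le> L" "F hi - F (w i) = c * (hi - w i)"
    using flux_increment[OF w_lower[of i] order_trans[OF w_lower[of i] w_upper[of i]]] by blast
  txt \<open>Shifted by F hi the fluxes are nonpositive, so only the first term of the
    summation by parts survives as a bound.\<close>
  have "(\<lambda>k. g k * ((F (w (i + int (Suc k))) - F hi) - (F (w (i + int k)) - F hi))) sums T"
    using flux_increments_sums unfolding T_def by simp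
  then have "T \<le> - (g 0 * (F (w (i + int 0)) - F hi))"
    using weight_nonneg weight_antimono mono_onD[OF flux_mono] w_lower w_upper
    by (intro sums_weighted_increments_le) auto
  then have "T \<le> g 0 * (F hi - F (w i))"
    by (simp add: algebra_simps)
  then have T_bound: "T \<le> g 0 * c * (hi - w i)"
    unfolding c(3) by (simp add: mult.assoc)
  have "lam * T \<le> lam * g 0 * c * (hi - w i)"
    using mult_left_mono[OF T_bound lam_nonneg] by (simp add: mult.assoc)
  also have "\<dots> \<le> hi - w i"
    using cfl_factor[OF c(1,2)] w_upper[of i] by (intro mult_left_le_one_le) auto
  finally show ?thesis
    unfolding scheme_step_def T_def[symmetric] by linarith
qed

lemma scheme_step_ge: "lo \<le> scheme_step g F lam w i"
proof -
  define T where "T = forward_conv g (\<lambda>j. F (w j)) (i + 1) - forward_conv g (\<lambda>j. F (w j)) i"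
  obtain c where c: "0 \<le> c" "c \<le> L" "F (w i) - F lo = c * (w i - lo)"
    using flux_increment[OF order_refl w_lower[of i]] by blast
  have "(\<lambda>k. g k * ((F lo - F (w (i + int (Suc k)))) - (F lo - F (w (i + int k))))) sums - T"
    using sums_minus[OF flux_increments_sums[of i]] unfolding T_def by (simp add: algebra_simps)
  then have "- T \<le> - (g 0 * (F lo - F (w (i + int 0))))"
    using weight_nonneg weight_antimono mono_onD[OF flux_mono] w_lower
    by (intro sums_weighted_increments_le) auto
  then have "- T \<le> g 0 * (F (w i) - F lo)"
    by (simp add: algebra_simps)
  then have T_bound: "- T \<le> g 0 * c * (w i - lo)"
    unfolding c(3) by (simp add: mult.assoc)
  have "- (lam * T) \<le> lam * g 0 * c * (w i - lo)"
    using mult_left_mono[OF T_bound lam_nonneg] by (simp add: mult.assoc)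
  also have "\<dots> \<le> w i - lo"
    using cfl_factor[OF c(1,2)] w_lower[of i] by (intro mult_left_le_one_le) auto
  finally show ?thesis
    unfolding scheme_step_def T_def[symmetric] by linarith
qed

lemma jump_le_max_jump: "\<bar>w (j + 1) - w j\<bar> \<le> max_jump w"
  by (rule abs_diff_le_max_jump[of lo w hi]) (simp_all add: w_lower w_upper)

lemma flux_jump_le: "\<bar>F (w (j + 1)) - F (w j)\<bar> \<le> L * max_jump w"
proof -
  have "\<bar>F (w (j + 1)) - F (w j)\<bar> \<le> L * \<bar>w (j + 1) - w j\<bar>"
    using lipschitz_onD[OF flux_lipschitz, of "w (j + 1)" "w j"] w_lower by (simp add: dist_real_def)
  also have "\<dots> \<le> L * max_jump w"
    using jump_le_max_jump lipschitz_on_nonneg[OF flux_lipschitz] by (rule mult_left_mono)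
  finally show ?thesis .
qed

lemma scheme_step_jump_le:
  "\<bar>scheme_step g F lam w (i + 1) - scheme_step g F lam w i\<bar> \<le> max_jump w * (1 + lam * L * g 0)"
proof -
  define D where "D = max_jump w"
  define T where "T i' = forward_conv g (\<lambda>j. F (w j)) (i' + 1) - forward_conv g (\<lambda>j. F (w j)) i'" for i'
  define e where "e k = F (w (i + int k + 1)) - F (w (i + int k))" for k
  have e_sums: "(\<lambda>k. g k * (e (Suc k) - e k)) sums (T (i + 1) - T i)"
    using sums_diff[OF flux_increments_sums[of "i + 1"] flux_increments_sums[of i]]
    unfolding T_def e_def by (simp add: algebra_simps)
  have e_bounded: "\<bar>e k\<bar> \<le> L * D" for k
    unfolding e_def D_def by (rule flux_jump_le)
  have T_bound: "\<bar>T (i + 1) - T i + g 0 * e 0\<bar> \<le> g 0 * (L * D)"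
    by (rule sums_weighted_increments_abs_le[OF weight_nonneg weight_antimono e_bounded e_sums])
  obtain c where c: "0 \<le> c" "c \<le> L" "e 0 = c * (w (i + 1) - w i)"
    using flux_increment[OF w_lower[of i] w_lower[of "i + 1"]] by (auto simp: e_def)
  txt \<open>The local flux jump damps the local jump by a factor in [0, 1]; the rest is bounded
    by summation by parts.\<close>
  have "scheme_step g F lam w (i + 1) - scheme_step g F lam w i
      = (w (i + 1) - w i) * (1 - lam * g 0 * c) + lam * (T (i + 1) - T i + g 0 * e 0)"
    unfolding scheme_step_def T_def c(3) by (simp add: algebra_simps)
  also have "\<bar>\<dots>\<bar> \<le> \<bar>w (i + 1) - w i\<bar> * (1 - lam * g 0 * c) + lam * \<bar>T (i + 1) - T i + g 0 * e 0\<bar>"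
    using cfl_factor[OF c(1,2)] lam_nonneg
    by (intro order_trans[OF abs_triangle_ineq]) (simp add: abs_mult)
  also have "\<dots> \<le> D * 1 + lam * (g 0 * (L * D))"
    using cfl_factor[OF c(1,2)] jump_le_max_jump[of i] order_trans[OF abs_ge_zero jump_le_max_jump]
    unfolding D_def
    by (intro add_mono[OF mult_mono mult_left_mono[OF T_bound[unfolded D_def] lam_nonneg]]) simp_all
  finally show ?thesis
    unfolding D_def by (simp add: algebra_simps)
qed

lemma scheme_step_increment_le: "\<bar>scheme_step g F lam w i - w i\<bar> \<le> lam * L * max_jump w"
proof -
  define T where "T = forward_conv g (\<lambda>j. F (w j)) (i + 1) - forward_conv g (\<lambda>j. F (w j)) i"
  have T_sums: "(\<lambda>k. g k * (F (w (i + int (Suc k))) - F (w (i + int k)))) sums T"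
    unfolding T_def by (rule flux_increments_sums)
  have increments_bounded: "\<bar>F (w (i + int (Suc k))) - F (w (i + int k))\<bar> \<le> L * max_jump w" for k
    using flux_jump_le[of "i + int k"] by (simp add: ac_simps)
  have "\<bar>T\<bar> \<le> L * max_jump w"
    by (rule sums_weighted_abs_le[OF weight_nonneg weight_summable weight_suminf_le
          increments_bounded T_sums])
  then have "lam * \<bar>T\<bar> \<le> lam * (L * max_jump w)"
    by (rule mult_left_mono[OF _ lam_nonneg])
  then show ?thesis
    using lam_nonneg unfolding scheme_step_def T_def[symmetric] by (simp add: abs_mult mult.assoc)
qed

end

lemma max_jump_scheme_step_le:
  assumes "\<And>j. lo \<le> w j" and "\<And>j. w j \<le> hi"
  shows "max_jump (scheme_step g F lam w) \<le> max_jump w * (1 + lam * L * g 0)"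
  unfolding max_jump_def[of "scheme_step g F lam w"]
  by (intro cSup_least) (use scheme_step_jump_le[of w hi, OF assms] in auto)

lemma Sup_scheme_step_increment_le:
  assumes "\<And>j. lo \<le> w j" and "\<And>j. w j \<le> hi"
  shows "Sup (range (\<lambda>i. \<bar>scheme_step g F lam w i - w i\<bar>)) \<le> lam * L * max_jump w"
  by (intro cSup_least) (use scheme_step_increment_le[of w hi, OF assms] in auto)

context
  fixes w :: "nat \<Rightarrow> int \<Rightarrow> real" and hi :: real
  assumes iterate: "\<And>n. w (Suc n) = scheme_step g F lam (w n)"
    and initial_lower: "\<And>j. lo \<le> w 0 j" and initial_upper: "\<And>j. w 0 j \<le> hi"
begin

lemma iterate_bounds: "lo \<le> w n j \<and> w n j \<le> hi"
proof (induction n arbitrary: j)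
  case 0
  then show ?case
    using initial_lower initial_upper by simp
next
  case (Suc n)
  then show ?case
    unfolding iterate using scheme_step_ge[of "w n" hi] scheme_step_le[of "w n" hi] by blast
qed

lemma iterate_max_jump_le: "max_jump (w n) \<le> max_jump (w 0) * (1 + lam * L * g 0) ^ n"
proof (induction n)
  case 0
  then show ?case by simp
next
  case (Suc n)
  have "0 \<le> 1 + lam * L * g 0"
    using lam_nonneg lipschitz_on_nonneg[OF flux_lipschitz] weight_nonneg[of 0] by simp
  have "max_jump (w (Suc n)) \<le> max_jump (w n) * (1 + lam * L * g 0)"
    unfolding iterate by (rule max_jump_scheme_step_le) (use iterate_bounds in blast)+
  also have "\<dots> \<le> max_jump (w 0) * (1 + lam * L * g 0) ^ n * (1 + lam * L * g 0)"
    using Suc.IH \<open>0 \<le> 1 + lam * L * g 0\<close> by (rule mult_right_mono)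
  finally show ?case
    by (simp add: mult_ac)
qed

lemma iterate_increment_le:
  "Sup (range (\<lambda>i. \<bar>w (Suc n) i - w n i\<bar>)) \<le> lam * L * (max_jump (w 0) * (1 + lam * L * g 0) ^ n)"
proof -
  have "Sup (range (\<lambda>i. \<bar>w (Suc n) i - w n i\<bar>)) \<le> lam * L * max_jump (w n)"
    unfolding iterate by (rule Sup_scheme_step_increment_le) (use iterate_bounds in blast)+
  also have "\<dots> \<le> lam * L * (max_jump (w 0) * (1 + lam * L * g 0) ^ n)"
    using lam_nonneg lipschitz_on_nonneg[OF flux_lipschitz] iterate_max_jump_le
    by (intro mult_left_mono) simp_all
  finally show ?thesis .
qed

end

end

section \<open>The kernel weights\<close>

definition kernel_weight :: "(real \<Rightarrow> real) \<Rightarrow> real \<Rightarrow> nat \<Rightarrow> real" where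
  "kernel_weight Phi h k = integral {real k * h .. real (Suc k) * h} Phi"

lemma Phi_ij_eq_kernel_weight:
  assumes integrable: "\<And>a b. 0 \<le> a \<Longrightarrow> Phi integrable_on {a..b}"
    and \<alpha>: "\<alpha> > 0" and dz: "dz > 0"
  shows "Phi_ij Phi \<alpha> dz i (i + int k) = kernel_weight Phi (dz / \<alpha>) k"
proof -
  define a where "a = real k * (dz / \<alpha>)"
  define b where "b = real (Suc k) * (dz / \<alpha>)"
  define c where "c = - (real_of_int (i - 1) * dz / \<alpha>)"
  have "(Phi has_integral kernel_weight Phi (dz / \<alpha>) k) (cbox a b)"
    using integrable[of a b] \<alpha> dz unfolding kernel_weight_def a_def b_def
    by (simp add: integrable_integral)
  then have "((\<lambda>x. Phi ((1 / \<alpha>) *\<^sub>R x + c)) has_integral kernel_weight Phi (dz / \<alpha>) k /\<^sub>R (1 / \<alpha>) ^ DIM(real))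
           (cbox ((a - c) /\<^sub>R (1 / \<alpha>)) ((b - c) /\<^sub>R (1 / \<alpha>)))"
    by (rule has_integral_affinity') (use \<alpha> in simp)
  moreover have "(a - c) /\<^sub>R (1 / \<alpha>) = real_of_int (i + int k - 1) * dz"
    and "(b - c) /\<^sub>R (1 / \<alpha>) = real_of_int (i + int k) * dz"
    using \<alpha> by (simp_all add: a_def b_def c_def field_simps)
  ultimately have "((\<lambda>x. Phi ((1 / \<alpha>) *\<^sub>R x + c) / \<alpha>) has_integral kernel_weight Phi (dz / \<alpha>) k)
           {real_of_int (i + int k - 1) * dz .. real_of_int (i + int k) * dz}"
    using has_integral_divide[of _ "kernel_weight Phi (dz / \<alpha>) k * \<alpha>" _ \<alpha>] \<alpha>
    by (simp add: mult.commute)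
  moreover have "Phi ((1 / \<alpha>) *\<^sub>R x + c) / \<alpha> = Phi_a Phi \<alpha> (x - real_of_int (i - 1) * dz)" for x
    by (simp add: Phi_a_def c_def diff_divide_distrib)
  ultimately show ?thesis
    unfolding Phi_ij_def by (simp add: integral_unique)
qed

lemma kconv_eq_forward_conv:
  assumes "\<And>a b. 0 \<le> a \<Longrightarrow> Phi integrable_on {a..b}" and "\<alpha> > 0" and "dz > 0"
  shows "kconv Phi \<alpha> dz i f = forward_conv (kernel_weight Phi (dz / \<alpha>)) f i"
  unfolding kconv_def forward_conv_def by (simp add: Phi_ij_eq_kernel_weight[OF assms])

locale decreasing_kernel =
  fixes Phi :: "real \<Rightarrow> real"
  assumes Phi_nonneg: "\<forall>z\<ge>0. Phi z \<ge> 0"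
    and Phi_antimono: "antimono_on {0..} Phi"
    and Phi_int: "(Phi has_integral 1) {0..}"
begin

lemma Phi_integrable: "0 \<le> a \<Longrightarrow> Phi integrable_on {a..b}"
  by (rule integrable_on_subinterval[OF has_integral_integrable[OF Phi_int]]) auto

lemma Phi_le: "0 \<le> x \<Longrightarrow> x \<le> y \<Longrightarrow> Phi y \<le> Phi x"
  using Phi_antimono by (simp add: monotone_on_def)

lemma integral_le_length_mult_Phi_left:
  assumes "0 \<le> a" "a \<le> b"
  shows "integral {a..b} Phi \<le> (b - a) * Phi a"
proof -
  have "integral {a..b} Phi \<le> integral {a..b} (\<lambda>x. Phi a)"
    using assms by (intro integral_le Phi_integrable) (auto intro: Phi_le)
  then show ?thesis
    using assms by simp
qed

lemma integral_ge_length_mult_Phi_right: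
  assumes "0 \<le> a" "a \<le> b"
  shows "(b - a) * Phi b \<le> integral {a..b} Phi"
proof -
  have "integral {a..b} (\<lambda>x. Phi b) \<le> integral {a..b} Phi"
    using assms by (intro integral_le Phi_integrable) (auto intro: Phi_le)
  then show ?thesis
    using assms by simp
qed

lemma integral_tendsto_1: "((\<lambda>b. integral {0..b} Phi) \<longlongrightarrow> 1) at_top"
proof -
  have Phi_abs: "Phi absolutely_integrable_on {0..}"
    by (rule nonnegative_absolutely_integrable_1[OF has_integral_integrable[OF Phi_int]])
      (use Phi_nonneg in auto)
  have "(LINT x:{0..b}|lebesgue. Phi x) = integral {0..b} Phi" for b
    by (rule set_lebesgue_integral_eq_integral(2)[OF set_integrable_subset[OF Phi_abs]]) auto
  moreover have "(LINT x:{0..}|lebesgue. Phi x) = 1"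
    using set_lebesgue_integral_eq_integral(2)[OF Phi_abs] integral_unique[OF Phi_int] by simp
  moreover have "((\<lambda>b. LINT x:{0..b}|lebesgue. Phi x) \<longlongrightarrow> (LINT x:{0..}|lebesgue. Phi x)) at_top"
    by (rule tendsto_set_lebesgue_integral_at_top) (use Phi_abs in auto)
  ultimately show ?thesis
    by simp
qed

lemma integral_Phi_nonneg: "0 \<le> a \<Longrightarrow> 0 \<le> integral {a..b} Phi"
  by (rule integral_nonneg[OF Phi_integrable]) (use Phi_nonneg in auto)

lemma kernel_weight_nonneg: "0 \<le> h \<Longrightarrow> 0 \<le> kernel_weight Phi h k"
  unfolding kernel_weight_def by (rule integral_Phi_nonneg) simp

lemma kernel_weight_Suc_le: "0 \<le> h \<Longrightarrow> kernel_weight Phi h (Suc k) \<le> kernel_weight Phi h k"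
  using integral_le_length_mult_Phi_left[of "real (Suc k) * h" "real (Suc (Suc k)) * h"]
    integral_ge_length_mult_Phi_right[of "real k * h" "real (Suc k) * h"]
  unfolding kernel_weight_def by (simp add: algebra_simps)

lemma kernel_weight_0_le: "0 \<le> h \<Longrightarrow> kernel_weight Phi h 0 \<le> h * Phi 0"
  using integral_le_length_mult_Phi_left[of 0 h] unfolding kernel_weight_def by simp

lemma sum_kernel_weight: "0 \<le> h \<Longrightarrow> (\<Sum>k<n. kernel_weight Phi h k) = integral {0..real n * h} Phi"
proof (induction n)
  case (Suc n)
  then show ?case
    using Henstock_Kurzweil_Integration.integral_combine[of 0 "real n * h" "real (Suc n) * h" Phi]
      Phi_integrable[of 0]
    by (simp add: kernel_weight_def mult_right_mono)
qed simp

lemma kernel_weight_sums: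
  assumes "0 < h"
  shows "kernel_weight Phi h sums 1"
proof -
  have "filterlim (\<lambda>n. real n * h) at_top sequentially"
    by (rule filterlim_at_top_mult_tendsto_pos[OF tendsto_const assms filterlim_real_sequentially])
  from filterlim_compose[OF integral_tendsto_1 this] show ?thesis
    unfolding sums_def sum_kernel_weight[OF less_imp_le[OF assms]] .
qed

end

section \<open>The flux W(w) = V(1/w)\<close>

locale decreasing_flux =
  fixes V V' :: "real \<Rightarrow> real"
  assumes V_deriv: "\<forall>x\<ge>0. (V has_real_derivative V' x) (at x within {0..})"
    and V'_cont: "continuous_on {0..} V'"
    and V_antimono: "antimono_on {0..} V"
begin

lemma Wf_has_real_derivative:
  assumes "0 < x"
  shows "(Wf V has_real_derivative V' (1 / x) * - (inverse x ^ 2)) (at x)"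
proof -
  have "(V has_real_derivative V' (1 / x)) (at (1 / x) within {0..})"
    using V_deriv assms by simp
  then have "(V has_real_derivative V' (1 / x)) (at (1 / x) within {0<..})"
    by (rule has_field_derivative_subset) auto
  moreover have "at (1 / x) within {0<..} = at (1 / x)"
    using assms by (intro at_within_open) auto
  ultimately have dV: "(V has_real_derivative V' (1 / x)) (at (1 / x))"
    by simp
  have "((\<lambda>w. 1 / w) has_real_derivative - (inverse x ^ 2)) (at x)"
    using DERIV_inverse[of x UNIV] assms by (simp add: inverse_eq_divide power2_eq_square)
  from DERIV_chain'[OF this dV] show ?thesis
    by (simp add: Wf_def[abs_def])
qed

lemma deriv_Wf_bounded: "\<exists>M. \<forall>x\<ge>1. \<bar>deriv (Wf V) x\<bar> \<le> M"
proof -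
  have "compact (V' ` {0..1})"
    by (rule compact_continuous_image[OF continuous_on_subset[OF V'_cont]]) auto
  then obtain M where "\<forall>z\<in>V' ` {0..1}. norm z \<le> M"
    using compact_imp_bounded[of "V' ` {0..1}"] unfolding bounded_iff by blast
  then have M: "\<bar>V' y\<bar> \<le> M" if "y \<in> {0..1}" for y
    using that by simp
  have "\<bar>deriv (Wf V) x\<bar> \<le> M" if "1 \<le> x" for x
  proof -
    have "deriv (Wf V) x = V' (1 / x) * - (inverse x ^ 2)"
      using that by (intro DERIV_imp_deriv Wf_has_real_derivative) simp
    then have "\<bar>deriv (Wf V) x\<bar> = \<bar>V' (1 / x)\<bar> * inverse x ^ 2"
      by (simp add: abs_mult)
    also have "\<dots> \<le> M * 1"
      using that M[of "1 / x"] M[of 0] by (intro mult_mono power_le_one) (simp_all add: inverse_le_1_iff)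
    finally show ?thesis
      by simp
  qed
  then show ?thesis by blast
qed

lemma bdd_above_deriv_Wf:
  "bdd_above (deriv (Wf V) ` {1..})" "bdd_above ((\<lambda>x. \<bar>deriv (Wf V) x\<bar>) ` {1..})"
proof -
  obtain M where "\<And>x. 1 \<le> x \<Longrightarrow> \<bar>deriv (Wf V) x\<bar> \<le> M"
    using deriv_Wf_bounded by blast
  then show "bdd_above (deriv (Wf V) ` {1..})" "bdd_above ((\<lambda>x. \<bar>deriv (Wf V) x\<bar>) ` {1..})"
    by (auto intro!: bdd_aboveI2[of _ _ M] dest: abs_le_D1)
qed

lemma Wf_mono_on: "mono_on {1..} (Wf V)"
proof (rule mono_onI)
  fix a b :: real
  assume "a \<in> {1..}" "b \<in> {1..}" "a \<le> b"
  moreover have "1 / b \<le> 1 / a"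
    using \<open>a \<in> {1..}\<close> \<open>a \<le> b\<close> by (intro divide_left_mono) auto
  ultimately have "V (1 / a) \<le> V (1 / b)"
    using V_antimono by (auto simp: monotone_on_def)
  then show "Wf V a \<le> Wf V b"
    by (simp add: Wf_def)
qed

lemma Wf_diff_le_Sup_deriv:
  assumes "1 \<le> x" "x \<le> y"
  shows "Wf V y - Wf V x \<le> Sup (deriv (Wf V) ` {1..}) * (y - x)"
proof (cases "x = y")
  case False
  then have "x < y" using assms by simp
  moreover have "(Wf V has_real_derivative deriv (Wf V) t) (at t)" if "x \<le> t" for t
    using that assms Wf_has_real_derivative DERIV_imp_deriv by (metis less_le_trans zero_less_one)
  ultimately obtain z where z: "x < z" "z < y" "Wf V y - Wf V x = (y - x) * deriv (Wf V) z"
    using MVT2[of x y "Wf V" "deriv (Wf V)"] by auto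
  have "deriv (Wf V) z \<le> Sup (deriv (Wf V) ` {1..})"
    by (rule cSup_upper[OF _ bdd_above_deriv_Wf(1)]) (use z assms in auto)
  with z \<open>x < y\<close> show ?thesis
    by (simp add: mult.commute mult_right_mono)
qed simp

lemma Sup_deriv_Wf_nonneg: "0 \<le> Sup (deriv (Wf V) ` {1..})"
  using Wf_diff_le_Sup_deriv[of 1 2] mono_onD[OF Wf_mono_on, of 1 2] by simp

lemma Wf_lipschitz_on: "(Sup (deriv (Wf V) ` {1..}))-lipschitz_on {1..} (Wf V)"
proof (rule lipschitz_on_leI[OF _ Sup_deriv_Wf_nonneg])
  fix x y :: real
  assume "x \<in> {1..}" "y \<in> {1..}" "x \<le> y"
  then show "dist (Wf V x) (Wf V y) \<le> Sup (deriv (Wf V) ` {1..}) * dist x y"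
    using Wf_diff_le_Sup_deriv[of x y] mono_onD[OF Wf_mono_on, of x y] by (simp add: dist_real_def)
qed

lemma Sup_deriv_Wf_le_Sup_abs: "Sup (deriv (Wf V) ` {1..}) \<le> Sup ((\<lambda>x. \<bar>deriv (Wf V) x\<bar>) ` {1..})"
  by (rule cSup_mono[OF _ bdd_above_deriv_Wf(2)]) (auto intro!: bexI abs_ge_self)

end

lemma Dw_eq_max_jump: "Dw w n = max_jump (w n)"
  by (simp add: Dw_def max_jump_def)

locale nonlocal_scheme = decreasing_kernel Phi + decreasing_flux V V'
  for Phi V V' :: "real \<Rightarrow> real" +
  fixes \<alpha> dz dt :: real
  assumes \<alpha>_pos: "0 < \<alpha>" and dz_pos: "0 < dz" and dt_pos: "0 < dt"
    and cfl_condition: "dt / dz * Sup (deriv (Wf V) ` {1..}) \<le> 1"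

sublocale nonlocal_scheme \<subseteq>
  monotone_scheme "kernel_weight Phi (dz / \<alpha>)" "Wf V" 1 "Sup (deriv (Wf V) ` {1..})" "dt / dz"
proof unfold_locales
  have h: "0 < dz / \<alpha>"
    using \<alpha>_pos dz_pos by simp
  show "0 \<le> kernel_weight Phi (dz / \<alpha>) k" "kernel_weight Phi (dz / \<alpha>) (Suc k) \<le> kernel_weight Phi (dz / \<alpha>) k"
    for k using h by (simp_all add: kernel_weight_nonneg kernel_weight_Suc_le)
  show "summable (kernel_weight Phi (dz / \<alpha>))" "suminf (kernel_weight Phi (dz / \<alpha>)) \<le> 1"
    using kernel_weight_sums[OF h] by (simp_all add: sums_iff)
  show "mono_on {1..} (Wf V)" "(Sup (deriv (Wf V) ` {1..}))-lipschitz_on {1..} (Wf V)"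
    by (fact Wf_mono_on Wf_lipschitz_on)+
  show "0 \<le> dt / dz"
    using dt_pos dz_pos by simp
  have "kernel_weight Phi (dz / \<alpha>) 0 \<le> suminf (kernel_weight Phi (dz / \<alpha>))"
    using kernel_weight_sums[OF h] kernel_weight_nonneg[OF less_imp_le[OF h]]
    by (intro sum_le_suminf[of _ "{0}", simplified]) (auto simp: sums_iff)
  then have "kernel_weight Phi (dz / \<alpha>) 0 \<le> 1"
    using kernel_weight_sums[OF h] by (simp add: sums_iff)
  then show "dt / dz * Sup (deriv (Wf V) ` {1..}) * kernel_weight Phi (dz / \<alpha>) 0 \<le> 1"
    using kernel_weight_nonneg[OF less_imp_le[OF h]] by (intro mult_le_one[OF cfl_condition]) auto
qed

context nonlocal_scheme
begin

lemma scheme_Suc: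
  "scheme Phi V \<alpha> dz dt y0 (Suc n)
     = scheme_step (kernel_weight Phi (dz / \<alpha>)) (Wf V) (dt / dz) (scheme Phi V \<alpha> dz dt y0 n)"
  by (rule ext) (simp add: scheme_step_def kconv_eq_forward_conv[OF Phi_integrable \<alpha>_pos dz_pos])

lemma scheme_initial_bounds:
  assumes "\<And>j. 1 \<le> y0 j" and "\<And>j. y0 j \<le> M"
  shows "1 \<le> scheme Phi V \<alpha> dz dt y0 0 j \<and> scheme Phi V \<alpha> dz dt y0 0 j \<le> M"
  using forward_conv_bounds[OF weight_nonneg kernel_weight_sums assms] \<alpha>_pos dz_pos
  by (simp add: kconv_eq_forward_conv[OF Phi_integrable \<alpha>_pos dz_pos])

lemma growth_factor_power_le_exp:
  "(1 + dt / dz * Sup (deriv (Wf V) ` {1..}) * kernel_weight Phi (dz / \<alpha>) 0) ^ n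
     \<le> exp (Sup (deriv (Wf V) ` {1..}) * Phi 0 / \<alpha> * (real n * dt))"
proof -
  define L where "L = Sup (deriv (Wf V) ` {1..})"
  have "dt / dz * L * kernel_weight Phi (dz / \<alpha>) 0 \<le> dt / dz * L * (dz / \<alpha> * Phi 0)"
    using dt_pos dz_pos \<alpha>_pos Sup_deriv_Wf_nonneg unfolding L_def
    by (intro mult_left_mono kernel_weight_0_le) auto
  also have "\<dots> = L * Phi 0 / \<alpha> * dt"
    using dz_pos by (simp add: field_simps)
  finally have "1 + dt / dz * L * kernel_weight Phi (dz / \<alpha>) 0 \<le> exp (L * Phi 0 / \<alpha> * dt)"
    using exp_ge_add_one_self[of "L * Phi 0 / \<alpha> * dt"] by linarith
  then have "(1 + dt / dz * L * kernel_weight Phi (dz / \<alpha>) 0) ^ n \<le> exp (L * Phi 0 / \<alpha> * dt) ^ n"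
    using dt_pos dz_pos Sup_deriv_Wf_nonneg weight_nonneg[of 0] unfolding L_def
    by (intro power_mono) auto
  then show ?thesis
    unfolding L_def by (simp add: exp_of_nat_mult[symmetric] mult_ac)
qed

lemma scheme_estimates:
  fixes n :: nat
  assumes "\<And>j. 1 \<le> y0 j" and "\<And>j. y0 j \<le> M"
  defines "w \<equiv> scheme Phi V \<alpha> dz dt y0"
    and "E \<equiv> exp (Sup (deriv (Wf V) ` {1..}) * Phi 0 / \<alpha> * (real n * dt))"
  shows "max_jump (w n) \<le> max_jump (w 0) * E"
    and "Sup (range (\<lambda>i. \<bar>w (Suc n) i - w n i\<bar>))
           \<le> dt / dz * Sup ((\<lambda>x. \<bar>deriv (Wf V) x\<bar>) ` {1..}) * max_jump (w 0) * E"
proof -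
  have initial: "1 \<le> w 0 j" "w 0 j \<le> M" for j
    using scheme_initial_bounds[OF assms(1,2)] unfolding w_def by simp_all
  have "0 \<le> max_jump (w 0)"
    using order_trans[OF abs_ge_zero abs_diff_le_max_jump[of 1 "w 0" M 0]] initial by simp
  then have growth: "max_jump (w 0) * (1 + dt / dz * Sup (deriv (Wf V) ` {1..}) * kernel_weight Phi (dz / \<alpha>) 0) ^ n
      \<le> max_jump (w 0) * E"
    unfolding E_def by (intro mult_left_mono growth_factor_power_le_exp)
  show "max_jump (w n) \<le> max_jump (w 0) * E"
    using iterate_max_jump_le[of w M n, OF scheme_Suc[of y0, folded w_def] initial] growth
    by (rule order_trans)
  have "0 \<le> dt / dz * Sup (deriv (Wf V) ` {1..})"
    using dt_pos dz_pos Sup_deriv_Wf_nonneg by simp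
  from mult_left_mono[OF growth this]
  have "Sup (range (\<lambda>i. \<bar>w (Suc n) i - w n i\<bar>))
      \<le> dt / dz * Sup (deriv (Wf V) ` {1..}) * (max_jump (w 0) * E)"
    by (rule order_trans[OF iterate_increment_le[of w M n, OF scheme_Suc[of y0, folded w_def] initial]])
  also have "\<dots> \<le> dt / dz * Sup ((\<lambda>x. \<bar>deriv (Wf V) x\<bar>) ` {1..}) * (max_jump (w 0) * E)"
    using dt_pos dz_pos Sup_deriv_Wf_le_Sup_abs \<open>0 \<le> max_jump (w 0)\<close>
    by (intro mult_right_mono mult_left_mono) (auto simp: E_def)
  finally show "Sup (range (\<lambda>i. \<bar>w (Suc n) i - w n i\<bar>))
      \<le> dt / dz * Sup ((\<lambda>x. \<bar>deriv (Wf V) x\<bar>) ` {1..}) * max_jump (w 0) * E"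
    by (simp add: mult.assoc)
qed

end

theorem lemma2p4:
  fixes Phi V V' :: "real \<Rightarrow> real"
  assumes Phi_nonneg: "\<forall>z\<ge>0. Phi z \<ge> 0"
    and Phi_mono: "antimono_on {0..} Phi"
    and Phi_int: "(Phi has_integral 1) {0..}"
    and Phi_moment: "(\<lambda>z. z * Phi z) integrable_on {0..}"
    and V_deriv: "\<forall>x\<ge>0. (V has_real_derivative V' x) (at x within {0..})"
    and V'_cont: "continuous_on {0..} V'"
    and V_mono: "antimono_on {0..} V"
  shows "\<exists>C::real. \<forall>dz dt \<alpha>::real. \<forall>y0::int \<Rightarrow> real.
    dz > 0 \<longrightarrow> dt > 0 \<longrightarrow> \<alpha> > 0 \<longrightarrow>
    0 \<le> (dt / dz) * Sup (deriv (Wf V) ` {1..}) \<longrightarrow>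
    (dt / dz) * Sup (deriv (Wf V) ` {1..}) \<le> 1 \<longrightarrow>
    bounded (range y0) \<longrightarrow> (\<forall>i. y0 i \<ge> 1) \<longrightarrow>
    (\<forall>n::nat.
       Dw (scheme Phi V \<alpha> dz dt y0) n
         \<le> Dw (scheme Phi V \<alpha> dz dt y0) 0 * exp (C / \<alpha> * (real n * dt))
     \<and> Sup (range (\<lambda>i. \<bar>scheme Phi V \<alpha> dz dt y0 (Suc n) i - scheme Phi V \<alpha> dz dt y0 n i\<bar>))
         \<le> (dt / dz) * Sup ((\<lambda>w. \<bar>deriv (Wf V) w\<bar>) ` {1..})
            * Dw (scheme Phi V \<alpha> dz dt y0) 0 * exp (C / \<alpha> * (real n * dt)))"
proof (intro exI[of _ "Sup (deriv (Wf V) ` {1..}) * Phi 0"] allI impI)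
  fix dz dt \<alpha> :: real and y0 :: "int \<Rightarrow> real" and n :: nat
  assume "dz > 0" "dt > 0" "\<alpha> > 0" and cfl: "dt / dz * Sup (deriv (Wf V) ` {1..}) \<le> 1"
    and y0_bounded: "bounded (range y0)" and y0_lower: "\<forall>i. y0 i \<ge> 1"
  interpret nonlocal_scheme Phi V V' \<alpha> dz dt
    by unfold_locales (use assms \<open>dz > 0\<close> \<open>dt > 0\<close> \<open>\<alpha> > 0\<close> cfl in auto)
  obtain M where "\<And>i. \<bar>y0 i\<bar> \<le> M"
    using y0_bounded unfolding bounded_iff by auto
  then have y0_upper: "y0 i \<le> M" for i
    by (rule abs_le_D1)
  show "Dw (scheme Phi V \<alpha> dz dt y0) n
         \<le> Dw (scheme Phi V \<alpha> dz dt y0) 0 * exp (Sup (deriv (Wf V) ` {1..}) * Phi 0 / \<alpha> * (real n * dt))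
     \<and> Sup (range (\<lambda>i. \<bar>scheme Phi V \<alpha> dz dt y0 (Suc n) i - scheme Phi V \<alpha> dz dt y0 n i\<bar>))
         \<le> (dt / dz) * Sup ((\<lambda>w. \<bar>deriv (Wf V) w\<bar>) ` {1..})
            * Dw (scheme Phi V \<alpha> dz dt y0) 0 * exp (Sup (deriv (Wf V) ` {1..}) * Phi 0 / \<alpha> * (real n * dt))"
    unfolding Dw_eq_max_jump using scheme_estimates[of y0 M n, OF y0_lower[rule_format] y0_upper] by blast
qed

end
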